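(* Let $\mathfrak m\in\mathbf R$, $\overline{\mathfrak m}=\max\{\mathfrak m,0\}$, $\lambda>0$, $\varepsilon>0$, $t>0$ and $m\ge1$ an integer. Define, with the convention $s_{m+1}=s_1$, $$\Phi_m(s_1,\dots,s_m)=\prod_{k=1}^m\frac{\lambda^2e^{\mathfrak m(s_k+s_{k+1})}}{2\pi(s_k+s_{k+1}+2\varepsilon^2)}.$$ Then $$\int_{[0,t]^m}\Phi_m(s_1,\dots,s_m)\,ds_1\cdots ds_m\le\frac{(\lambda e^{\overline{\mathfrak m}t})^{2m}}{2^m\pi}\log\Big(1+\frac{t}{\varepsilon^2}\Big).$$ *)

theory Defs
  imports "HOL-Analysis.Analysis"
begin

text \<open>The integrand Phi_m, with indices 1..m shifted to 0..m-1 and the cyclic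
convention s_(m+1) = s_1 realised by taking the index (k+1) mod m.\<close>
definition Phi :: "real \<Rightarrow> real \<Rightarrow> real \<Rightarrow> nat \<Rightarrow> (nat \<Rightarrow> real) \<Rightarrow> real" where
  "Phi lam mm eps m s =
     (\<Prod>k<m. lam\<^sup>2 * exp (mm * (s k + s ((k + 1) mod m)))
              / (2 * pi * (s k + s ((k + 1) mod m) + 2 * eps\<^sup>2)))"

end

theory Submission
  imports Defs
begin

text \<open>
  Write c = eps^2 and K(x,y) = 1/(x+y+2c). After bounding every exponential by e^(2 max(mm,0) t),
  the integrand is a constant times the cyclic product K(s_0,s_1) ... K(s_n,s_0). The Schur
  test weight w(y) = (y+c)^(-1/2) satisfies int_0^oo K(x,y) w(y) dy <= pi w(x), and by AM-GM
  K(x,y) <= w(x) w(y) / 2. Cutting the cycle at the edge (s_n,s_0) with the latter leaves the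
  path w(s_n) K(s_n,s_(n-1)) ... K(s_1,s_0) w(s_0); integrating out s_0, ..., s_(n-1) in turn
  costs a factor pi each, and the last integral is int_0^t w^2 = log(1 + t/c).
\<close>

definition hilbert_kernel :: "real \<Rightarrow> real \<Rightarrow> real \<Rightarrow> real" where
  "hilbert_kernel c x y = 1 / (x + y + 2 * c)"

definition schur_weight :: "real \<Rightarrow> real \<Rightarrow> real" where
  "schur_weight c y = 1 / sqrt (y + c)"

lemma hilbert_kernel_commute: "hilbert_kernel c x y = hilbert_kernel c y x"
  by (simp add: hilbert_kernel_def add_ac)

lemma hilbert_kernel_le_schur_weight:
  assumes "c > 0" "x \<ge> 0" "y \<ge> 0"
  shows "hilbert_kernel c x y \<le> schur_weight c x * schur_weight c y / 2"
proof -
  define a b where "a = sqrt (x + c)" and "b = sqrt (y + c)"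
  have a: "a > 0" "a\<^sup>2 = x + c" and b: "b > 0" "b\<^sup>2 = y + c"
    using assms by (auto simp: a_def b_def)
  have "2 * a * b \<le> a\<^sup>2 + b\<^sup>2"
    using sum_squares_bound[of a b] by simp
  then have "1 / (a\<^sup>2 + b\<^sup>2) \<le> 1 / (2 * a * b)"
    using a(1) b(1) by (intro divide_left_mono) (auto simp del: a b intro!: mult_pos_pos add_pos_pos)
  then show ?thesis
    unfolding hilbert_kernel_def schur_weight_def a_def[symmetric] b_def[symmetric]
    using a b by (simp add: algebra_simps)
qed

text \<open>The substitution u = sqrt (y + c) turns K(x,y) w(y) dy into 2 du / (x + c + u^2).\<close>

lemma hilbert_kernel_schur_weight_has_derivative:
  assumes "c > 0" "x \<ge> 0" "y > - c"
  shows "((\<lambda>y. 2 / sqrt (x + c) * arctan (sqrt (y + c) / sqrt (x + c)))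
           has_real_derivative hilbert_kernel c x y * schur_weight c y) (at y)"
proof -
  define a u where "a = sqrt (x + c)" and "u = sqrt (y + c)"
  have a: "a > 0" "a\<^sup>2 = x + c" and u: "u > 0" "u\<^sup>2 = y + c"
    using assms by (auto simp: a_def u_def)
  have "((\<lambda>y. 2 / a * arctan (sqrt (y + c) / a))
          has_real_derivative 2 / a * (inverse (1 + (u / a)\<^sup>2) * (inverse u / 2 / a))) (at y)"
    using assms(3) a(1) unfolding u_def
    by (auto intro!: derivative_eq_intros)
  moreover have "2 / a * (inverse (1 + (u / a)\<^sup>2) * (inverse u / 2 / a)) = 1 / (a\<^sup>2 + u\<^sup>2) * (1 / u)"
    using a(1) u(1) by (simp add: divide_simps power2_eq_square)
  ultimately show ?thesis
    unfolding hilbert_kernel_def schur_weight_def a_def[symmetric] u_def[symmetric]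
    by (simp add: a u algebra_simps)
qed

lemma hilbert_kernel_schur_weight_integral_le:
  assumes "c > 0" "x \<ge> 0" "t \<ge> 0"
  shows "(\<integral>\<^sup>+y. ennreal (hilbert_kernel c x y * schur_weight c y) * indicator {0..t} y \<partial>lborel)
           \<le> ennreal (pi * schur_weight c x)" (is "?I \<le> _")
proof -
  define F where "F y = 2 / sqrt (x + c) * arctan (sqrt (y + c) / sqrt (x + c))" for y
  have "?I = ennreal (F t - F 0)"
    unfolding F_def using assms
    by (intro nn_integral_FTC_Icc hilbert_kernel_schur_weight_has_derivative)
       (auto simp: hilbert_kernel_def schur_weight_def)
  also have "F t - F 0 \<le> pi * schur_weight c x"
  proof -
    have "F 0 \<ge> 0" using assms by (simp add: F_def)
    moreover have "F t \<le> 2 / sqrt (x + c) * (pi / 2)"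
      using assms arctan_ubound[of "sqrt (t + c) / sqrt (x + c)"] unfolding F_def
      by (intro mult_left_mono) auto
    ultimately show ?thesis by (simp add: schur_weight_def)
  qed
  finally show ?thesis by (simp add: ennreal_leI)
qed

lemma log_integral:
  assumes "c > 0" "t \<ge> 0"
  shows "(\<integral>\<^sup>+y. ennreal (1 / (y + c)) * indicator {0..t} y \<partial>lborel) = ennreal (ln (1 + t / c))"
proof -
  have "(\<integral>\<^sup>+y. ennreal (1 / (y + c)) * indicator {0..t} y \<partial>lborel) = ennreal (ln (t + c) - ln (0 + c))"
    using assms by (intro nn_integral_FTC_Icc) (auto intro!: derivative_eq_intros simp: field_simps)
  also have "ln (t + c) - ln (0 + c) = ln (1 + t / c)"
    using assms by (simp add: ln_div field_simps)
  finally show ?thesis .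
qed

fun path_prod :: "real \<Rightarrow> real \<Rightarrow> nat list \<Rightarrow> (nat \<Rightarrow> real) \<Rightarrow> real" where
  "path_prod c v [] x = schur_weight c v"
| "path_prod c v (j # js) x = hilbert_kernel c v (x j) * path_prod c (x j) js x"

lemma path_prod_upd_other: "j \<notin> set js \<Longrightarrow> path_prod c v js (x(j := y)) = path_prod c v js x"
  by (induction js arbitrary: v) auto

lemma path_prod_measurable:
  assumes "set js \<subseteq> I" "g \<in> borel_measurable (PiM I (\<lambda>_. lborel))"
  shows "(\<lambda>x. path_prod c (g x) js x) \<in> borel_measurable (PiM I (\<lambda>_. lborel))"
  using assms
proof (induction js arbitrary: g)
  case Nil
  then show ?case unfolding path_prod.simps schur_weight_def by measurable
next
  case (Cons j js)
  have "j \<in> I" using Cons.prems by simp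
  then have [measurable]: "(\<lambda>x. x j) \<in> borel_measurable (PiM I (\<lambda>_. lborel))"
    by measurable
  then have [measurable]: "(\<lambda>x. path_prod c (x j) js x) \<in> borel_measurable (PiM I (\<lambda>_. lborel))"
    using Cons.prems by (intro Cons.IH) auto
  have [measurable]: "g \<in> borel_measurable (PiM I (\<lambda>_. lborel))"
    using Cons.prems by simp
  show ?case unfolding path_prod.simps hilbert_kernel_def by measurable
qed

definition cube :: "real \<Rightarrow> nat set \<Rightarrow> (nat \<Rightarrow> real) set" where
  "cube t A = {x. \<forall>i\<in>A. x i \<in> {0..t}}"

lemma indicator_cube_measurable[measurable]:
  assumes "finite A" "A \<subseteq> I"
  shows "(\<lambda>x. indicator (cube t A) x :: ennreal) \<in> borel_measurable (PiM I (\<lambda>_. lborel))"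
proof -
  have [measurable]: "Measurable.pred (PiM I (\<lambda>_. lborel)) (\<lambda>x. \<forall>i\<in>A. x i \<in> {0..t})"
    by measurable (use assms in auto)
  show ?thesis
    unfolding cube_def indicator_def by measurable
qed

lemma fun_upd_in_cube_iff:
  "j \<notin> J \<Longrightarrow> x(j := y) \<in> cube t (insert j J) \<longleftrightarrow> y \<in> {0..t} \<and> x \<in> cube t J"
  by (auto simp: cube_def)

lemma schur_weight_nonneg: "c \<ge> 0 \<Longrightarrow> y \<ge> 0 \<Longrightarrow> schur_weight c y \<ge> 0"
  by (simp add: schur_weight_def)

lemma path_prod_integral_peel:
  fixes f :: "real \<Rightarrow> real"
  assumes "j \<notin> set js" "c \<ge> 0" "B \<ge> 0"
    and [measurable]: "f \<in> borel_measurable borel"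
    and f_nonneg: "\<And>y. y \<in> {0..t} \<Longrightarrow> f y \<ge> 0"
    and inner: "\<And>y. y \<in> {0..t} \<Longrightarrow>
      (\<integral>\<^sup>+x. ennreal (path_prod c y js x) * indicator (cube t (set js)) x \<partial>PiM (set js) (\<lambda>_. lborel))
        \<le> ennreal (B * schur_weight c y)"
  shows "(\<integral>\<^sup>+x. ennreal (f (x j) * path_prod c (x j) js x) * indicator (cube t (insert j (set js))) x
            \<partial>PiM (insert j (set js)) (\<lambda>_. lborel))
         \<le> ennreal B * (\<integral>\<^sup>+y. ennreal (f y * schur_weight c y) * indicator {0..t} y \<partial>lborel)"
proof -
  interpret product_sigma_finite "\<lambda>_::nat. lborel::real measure" by standard
  let ?M = "PiM (set js) (\<lambda>_. lborel::real measure)"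
  let ?Q = "cube t (insert j (set js))"
  let ?inner = "\<lambda>y. \<integral>\<^sup>+x. ennreal (path_prod c y js x) * indicator (cube t (set js)) x \<partial>?M"
  have [measurable]: "(\<lambda>x. path_prod c (x j) js x) \<in> borel_measurable (PiM (insert j (set js)) (\<lambda>_. lborel))"
    by (rule path_prod_measurable) auto
  have [measurable]: "(\<lambda>x. path_prod c y js x) \<in> borel_measurable ?M" for y
    by (rule path_prod_measurable) auto
  have slice: "(\<integral>\<^sup>+x. ennreal (f y * path_prod c y js x) * indicator ?Q (x(j := y)) \<partial>?M)
      = ennreal (f y) * indicator {0..t} y * ?inner y" for y
  proof -
    have "(\<integral>\<^sup>+x. ennreal (f y * path_prod c y js x) * indicator ?Q (x(j := y)) \<partial>?M)
        = (\<integral>\<^sup>+x. ennreal (f y) * indicator {0..t} y *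
              (ennreal (path_prod c y js x) * indicator (cube t (set js)) x) \<partial>?M)"
      using assms(1) f_nonneg
      by (intro nn_integral_cong) (auto simp: fun_upd_in_cube_iff indicator_def ennreal_mult')
    also have "\<dots> = ennreal (f y) * indicator {0..t} y * ?inner y"
      by (rule nn_integral_cmult) measurable
    finally show ?thesis .
  qed
  have "(\<integral>\<^sup>+x. ennreal (f (x j) * path_prod c (x j) js x) * indicator ?Q x \<partial>PiM (insert j (set js)) (\<lambda>_. lborel))
      = (\<integral>\<^sup>+y. \<integral>\<^sup>+x. ennreal (f y * path_prod c y js x) * indicator ?Q (x(j := y)) \<partial>?M \<partial>lborel)"
    using assms(1) by (subst product_nn_integral_insert_rev) (auto simp: path_prod_upd_other)
  also have "\<dots> = (\<integral>\<^sup>+y. ennreal (f y) * indicator {0..t} y * ?inner y \<partial>lborel)"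
    by (simp only: slice)
  also have "\<dots> \<le> (\<integral>\<^sup>+y. ennreal B * (ennreal (f y * schur_weight c y) * indicator {0..t} y) \<partial>lborel)"
  proof (rule nn_integral_mono)
    fix y :: real
    show "ennreal (f y) * indicator {0..t} y * ?inner y
        \<le> ennreal B * (ennreal (f y * schur_weight c y) * indicator {0..t} y)"
    proof (cases "y \<in> {0..t}")
      case True
      have "ennreal (f y) * ?inner y \<le> ennreal (f y) * ennreal (B * schur_weight c y)"
        using inner[OF True] by (rule mult_left_mono) simp
      also have "\<dots> = ennreal B * ennreal (f y * schur_weight c y)"
        using True assms(2,3) f_nonneg schur_weight_nonneg
        by (simp add: ennreal_mult'[symmetric] mult_ac)
      finally show ?thesis using True by (simp add: mult_ac)
    qed simp
  qed
  also have "\<dots> = ennreal B * (\<integral>\<^sup>+y. ennreal (f y * schur_weight c y) * indicator {0..t} y \<partial>lborel)"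
    by (rule nn_integral_cmult) (simp add: schur_weight_def)
  finally show ?thesis .
qed

lemma path_prod_integral_le:
  assumes "c > 0" "t \<ge> 0" "distinct js" "v \<ge> 0"
  shows "(\<integral>\<^sup>+x. ennreal (path_prod c v js x) * indicator (cube t (set js)) x \<partial>PiM (set js) (\<lambda>_. lborel))
           \<le> ennreal (pi ^ length js * schur_weight c v)"
  using assms(3,4)
proof (induction js arbitrary: v)
  case Nil
  then show ?case
    by (simp add: PiM_empty cube_def nn_integral_count_space_finite)
next
  case (Cons j js)
  have "(\<integral>\<^sup>+x. ennreal (hilbert_kernel c v (x j) * path_prod c (x j) js x)
               * indicator (cube t (insert j (set js))) x \<partial>PiM (insert j (set js)) (\<lambda>_. lborel))
        \<le> ennreal (pi ^ length js)
           * (\<integral>\<^sup>+y. ennreal (hilbert_kernel c v y * schur_weight c y) * indicator {0..t} y \<partial>lborel)"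
    using Cons assms(1) by (intro path_prod_integral_peel) (auto simp: hilbert_kernel_def)
  also have "\<dots> \<le> ennreal (pi ^ length js) * ennreal (pi * schur_weight c v)"
    using hilbert_kernel_schur_weight_integral_le[OF assms(1) Cons.prems(2) assms(2)] by (rule mult_left_mono) simp
  finally show ?case
    using assms(1) Cons.prems(2) by (simp add: ennreal_mult'[symmetric] schur_weight_nonneg mult_ac)
qed

lemma closed_path_integral_le:
  assumes "c > 0" "t \<ge> 0" "distinct (n # js)"
  shows "(\<integral>\<^sup>+x. ennreal (schur_weight c (x n) * path_prod c (x n) js x)
               * indicator (cube t (insert n (set js))) x \<partial>PiM (insert n (set js)) (\<lambda>_. lborel))
         \<le> ennreal (pi ^ length js * ln (1 + t / c))" (is "?I \<le> _")
proof -
  have "?I \<le> ennreal (pi ^ length js)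
           * (\<integral>\<^sup>+y. ennreal (schur_weight c y * schur_weight c y) * indicator {0..t} y \<partial>lborel)"
    using assms path_prod_integral_le[OF assms(1,2)]
    by (intro path_prod_integral_peel) (auto simp: schur_weight_def)
  also have "(\<integral>\<^sup>+y. ennreal (schur_weight c y * schur_weight c y) * indicator {0..t} y \<partial>lborel)
           = (\<integral>\<^sup>+y. ennreal (1 / (y + c)) * indicator {0..t} y \<partial>lborel)"
    using assms(1) by (intro nn_integral_cong) (auto simp: schur_weight_def indicator_def)
  finally show ?thesis
    using assms(1,2) by (simp add: log_integral ennreal_mult'[symmetric])
qed

lemma path_prod_descending:
  "path_prod c (s n) (rev [0..<n]) s = (\<Prod>k<n. hilbert_kernel c (s k) (s (k + 1))) * schur_weight c (s 0)"
  by (induction n) (auto simp: hilbert_kernel_commute mult_ac)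

lemma cyclic_hilbert_kernel_prod_le:
  assumes "c > 0" "\<And>i. i < Suc n \<Longrightarrow> s i \<ge> 0"
  shows "(\<Prod>k<Suc n. hilbert_kernel c (s k) (s ((k + 1) mod Suc n)))
           \<le> schur_weight c (s n) * path_prod c (s n) (rev [0..<n]) s / 2"
proof -
  have "(\<Prod>k<Suc n. hilbert_kernel c (s k) (s ((k + 1) mod Suc n)))
        = (\<Prod>k<n. hilbert_kernel c (s k) (s (k + 1))) * hilbert_kernel c (s n) (s 0)"
    by (simp add: prod.lessThan_Suc)
  also have "\<dots> \<le> (\<Prod>k<n. hilbert_kernel c (s k) (s (k + 1))) * (schur_weight c (s n) * schur_weight c (s 0) / 2)"
    using assms by (intro mult_left_mono hilbert_kernel_le_schur_weight prod_nonneg) (auto simp: hilbert_kernel_def)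
  finally show ?thesis
    by (simp add: path_prod_descending mult_ac)
qed

lemma Phi_factor_le:
  assumes "eps > 0" "a \<in> {0..t}" "b \<in> {0..t}"
  shows "lam\<^sup>2 * exp (mm * (a + b)) / (2 * pi * (a + b + 2 * eps\<^sup>2))
           \<le> (lam * exp (max mm 0 * t))\<^sup>2 / (2 * pi) * hilbert_kernel (eps\<^sup>2) a b"
proof -
  have "mm * (a + b) \<le> max mm 0 * (a + b)"
    using assms by (intro mult_right_mono) auto
  also have "\<dots> \<le> max mm 0 * (2 * t)"
    using assms by (intro mult_left_mono) auto
  finally have "exp (mm * (a + b)) \<le> (exp (max mm 0 * t))\<^sup>2"
    by (simp add: power2_eq_square exp_add[symmetric] algebra_simps)
  then have "lam\<^sup>2 * exp (mm * (a + b)) / (2 * pi) \<le> (lam * exp (max mm 0 * t))\<^sup>2 / (2 * pi)"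
    unfolding power_mult_distrib by (intro divide_right_mono mult_left_mono) auto
  moreover have "hilbert_kernel (eps\<^sup>2) a b \<ge> 0"
    using assms by (simp add: hilbert_kernel_def)
  moreover have "lam\<^sup>2 * exp (mm * (a + b)) / (2 * pi * (a + b + 2 * eps\<^sup>2))
      = lam\<^sup>2 * exp (mm * (a + b)) / (2 * pi) * hilbert_kernel (eps\<^sup>2) a b"
    by (simp add: hilbert_kernel_def)
  ultimately show ?thesis
    by (metis mult_right_mono)
qed

lemma Phi_le_closed_path:
  assumes "eps > 0" "\<And>i. i < Suc n \<Longrightarrow> s i \<in> {0..t}"
  shows "Phi lam mm eps (Suc n) s
           \<le> ((lam * exp (max mm 0 * t))\<^sup>2 / (2 * pi)) ^ Suc n / 2
             * (schur_weight (eps\<^sup>2) (s n) * path_prod (eps\<^sup>2) (s n) (rev [0..<n]) s)"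
proof -
  define A where "A = (lam * exp (max mm 0 * t))\<^sup>2 / (2 * pi)"
  have "Phi lam mm eps (Suc n) s \<le> (\<Prod>k<Suc n. A * hilbert_kernel (eps\<^sup>2) (s k) (s ((k + 1) mod Suc n)))"
    unfolding Phi_def A_def using assms
    by (intro prod_mono conjI Phi_factor_le) auto
  also have "\<dots> = A ^ Suc n * (\<Prod>k<Suc n. hilbert_kernel (eps\<^sup>2) (s k) (s ((k + 1) mod Suc n)))"
    by (simp add: prod.distrib)
  also have "\<dots> \<le> A ^ Suc n * (schur_weight (eps\<^sup>2) (s n) * path_prod (eps\<^sup>2) (s n) (rev [0..<n]) s / 2)"
    using assms by (intro mult_left_mono cyclic_hilbert_kernel_prod_le) (auto simp: A_def)
  finally show ?thesis
    by (simp add: A_def)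
qed

lemma nn_integral_Phi_le_closed_path:
  assumes "eps > 0"
  shows "(\<integral>\<^sup>+ s \<in> {s. \<forall>i<Suc n. s i \<in> {0..t}}. ennreal (Phi lam mm eps (Suc n) s)
            \<partial>PiM {..<Suc n} (\<lambda>_. lborel))
         \<le> ennreal (((lam * exp (max mm 0 * t))\<^sup>2 / (2 * pi)) ^ Suc n / 2)
           * (\<integral>\<^sup>+ s. ennreal (schur_weight (eps\<^sup>2) (s n) * path_prod (eps\<^sup>2) (s n) (rev [0..<n]) s)
                 * indicator (cube t {..<Suc n}) s \<partial>PiM {..<Suc n} (\<lambda>_. lborel))"
    (is "_ \<le> ennreal ?C * (\<integral>\<^sup>+ s. ennreal (?closed s) * _ \<partial>?M)")
proof -
  have "(\<lambda>s. path_prod (eps\<^sup>2) (s n) (rev [0..<n]) s) \<in> borel_measurable ?M"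
    by (rule path_prod_measurable) auto
  then have [measurable]: "?closed \<in> borel_measurable ?M"
    unfolding schur_weight_def by measurable
  have "?C \<ge> 0"
    by simp
  have "(\<integral>\<^sup>+ s \<in> {s. \<forall>i<Suc n. s i \<in> {0..t}}. ennreal (Phi lam mm eps (Suc n) s) \<partial>?M)
        \<le> (\<integral>\<^sup>+ s. ennreal ?C * (ennreal (?closed s) * indicator (cube t {..<Suc n}) s) \<partial>?M)"
  proof (intro nn_integral_mono)
    fix s :: "nat \<Rightarrow> real"
    show "ennreal (Phi lam mm eps (Suc n) s) * indicator {s. \<forall>i<Suc n. s i \<in> {0..t}} s
        \<le> ennreal ?C * (ennreal (?closed s) * indicator (cube t {..<Suc n}) s)"
    proof (cases "s \<in> cube t {..<Suc n}")
      case True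
      then have "Phi lam mm eps (Suc n) s \<le> ?C * ?closed s"
        using Phi_le_closed_path[OF assms] by (simp add: cube_def)
      then show ?thesis
        using True \<open>?C \<ge> 0\<close> by (simp add: cube_def ennreal_mult'[symmetric] ennreal_leI)
    qed (auto simp: cube_def indicator_def)
  qed
  also have "\<dots> = ennreal ?C * (\<integral>\<^sup>+ s. ennreal (?closed s) * indicator (cube t {..<Suc n}) s \<partial>?M)"
    by (rule nn_integral_cmult) measurable
  finally show ?thesis .
qed

lemma power_half_square_over_pi:
  fixes X :: real
  shows "(X\<^sup>2 / (2 * pi)) ^ Suc n * pi ^ n = X ^ (2 * Suc n) / (2 ^ Suc n * pi)"
  unfolding power_mult by (simp add: power_divide field_simps)

theorem mainTheorem9:
  fixes mm lam eps t :: real and m :: nat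
  assumes "lam > 0" and "eps > 0" and "t > 0" and "m \<ge> 1"
  shows "(\<integral>\<^sup>+ s \<in> {s. \<forall>i<m. s i \<in> {0..t}}. ennreal (Phi lam mm eps m s)
            \<partial>(PiM {..<m} (\<lambda>_. lborel)))
         \<le> ennreal ((lam * exp (max mm 0 * t)) ^ (2 * m) / (2 ^ m * pi)
                    * ln (1 + t / eps\<^sup>2))"
proof -
  obtain n where m: "m = Suc n" using assms(4) by (cases m) auto
  define C where "C = ((lam * exp (max mm 0 * t))\<^sup>2 / (2 * pi)) ^ Suc n"
  define L where "L = ln (1 + t / eps\<^sup>2)"
  have "C \<ge> 0" "L \<ge> 0"
    using assms(2,3) by (simp_all add: C_def L_def)
  have "(\<integral>\<^sup>+ s \<in> {s. \<forall>i<m. s i \<in> {0..t}}. ennreal (Phi lam mm eps m s) \<partial>(PiM {..<m} (\<lambda>_. lborel)))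
        \<le> ennreal (C / 2) * (\<integral>\<^sup>+ s. ennreal (schur_weight (eps\<^sup>2) (s n) * path_prod (eps\<^sup>2) (s n) (rev [0..<n]) s)
                 * indicator (cube t {..<Suc n}) s \<partial>PiM {..<Suc n} (\<lambda>_. lborel))"
    unfolding m C_def by (rule nn_integral_Phi_le_closed_path[OF assms(2)])
  also have "\<dots> \<le> ennreal (C / 2) * ennreal (pi ^ n * L)"
    using closed_path_integral_le[of "eps\<^sup>2" t n "rev [0..<n]"] assms(2,3)
    by (intro mult_left_mono) (simp_all add: L_def lessThan_Suc atLeast0LessThan)
  also have "\<dots> \<le> ennreal (C * pi ^ n * L)"
    using \<open>C \<ge> 0\<close> \<open>L \<ge> 0\<close> by (simp add: ennreal_mult'[symmetric] ennreal_leI)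
  finally show ?thesis
    unfolding C_def L_def m power_half_square_over_pi .
qed

end
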